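(* Let $N \ge 2$ and let $\alpha = (\alpha_1,\dots,\alpha_N) : \mathbb{R}^{3N} \to \mathbb{R}^N$ be a $C^\infty$ map. Then the sortlet $\Psi_\alpha : \mathbb{R}^{3N} \to \mathbb{R}$ (defined in the context) is continuously once-differentiable on $\mathbb{R}^{3N}$, i.e. all first partial derivatives $\partial \Psi_\alpha / \partial r^i$ exist and are continuous on $\mathbb{R}^{3N}$.
   Context: Write points of $\mathbb{R}^{3N}$ as $r = (r_1,\dots,r_N)$ with $r_i \in \mathbb{R}^3$. Sortlet: at a configuration $r$ where the values $\alpha_1(r),\dots,\alpha_N(r)$ are pairwise distinct, let $\pi_\alpha$ be the unique permutation of $\{1,\dots,N\}$ with $\alpha_{\pi_\alpha(1)}(r) < \dots < \alpha_{\pi_\alpha(N)}(r)$ (the permutation sorting $\alpha(r)$), and set $$\Psi_\alpha(r) = \sigma(\pi_\alpha) \prod_{i=1}^{N-1} \big(\alpha_{\pi_\alpha(i+1)}(r) - \alpha_{\pi_\alpha(i)}(r)\big),$$ where $\sigma(\pi) \in \{+1,-1\}$ is the sign (parity) of $\pi$. At configurations where two of the values $\alpha_i(r)$ coincide, the product of consecutive sorted differences vanishes and $\Psi_\alpha(r) = 0$. *)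

theory Defs
  imports "HOL-Analysis.Analysis"
begin

fun Ck :: "nat \<Rightarrow> ('a::euclidean_space \<Rightarrow> real) \<Rightarrow> bool" where
  "Ck 0 f = continuous_on UNIV f"
| "Ck (Suc k) f = (continuous_on UNIV f \<and>
     (\<forall>b\<in>Basis. \<exists>g. (\<forall>x. ((\<lambda>t. f (x + t *\<^sub>R b)) has_real_derivative g x) (at 0)) \<and> Ck k g))"

definition smooth_fun :: "('a::euclidean_space \<Rightarrow> real) \<Rightarrow> bool" where
  "smooth_fun f = (\<forall>k. Ck k f)"

definition idx :: "nat \<Rightarrow> 'n::{finite,linorder}" where
  "idx i = sorted_list_of_set (UNIV :: 'n set) ! i"

text \<open>Sorting permutation of the index type: p is the permutation such that
  a < b implies alpha_(p a) < alpha_(p b); the paper's pi_alpha(i+1) is p (idx i).\<close>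
definition sortperm :: "(((real,3) vec,'n::{finite,linorder}) vec \<Rightarrow> (real,'n) vec) \<Rightarrow> ((real,3) vec,'n) vec \<Rightarrow> ('n \<Rightarrow> 'n)" where
  "sortperm \<alpha> r = (THE p. p permutes UNIV \<and>
      (\<forall>a b. a < b \<longrightarrow> \<alpha> r $ p a < \<alpha> r $ p b))"

definition sortlet :: "(((real,3) vec,'n::{finite,linorder}) vec \<Rightarrow> (real,'n) vec) \<Rightarrow> ((real,3) vec,'n) vec \<Rightarrow> real" where
  "sortlet \<alpha> r =
     (if inj (\<lambda>i. \<alpha> r $ i)
      then (let p = sortperm \<alpha> r in
            of_int (sign p) *
            (\<Prod>i<CARD('n) - 1. \<alpha> r $ p (idx (Suc i)) - \<alpha> r $ p (idx i)))
      else 0)"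

end

theory Submission
  imports Defs
begin

(* Sort a vector a of R^N by a weakly sorting permutation s, so that a_s(1) <= ... <= a_s(N).
   The signed product of consecutive gaps sign(s) * prod_k (a_s(k+1) - a_s(k)) does not depend
   on the choice of s, since different choices exist only when some gap vanishes. Neither does
   its derivative: with two vanishing gaps every term of the product rule vanishes, and with
   exactly one, two admissible choices of s differ by the transposition of the tied entries,
   which flips both sign(s) and the derivative of the vanishing gap. Every sorting permutation
   of a vector close to a also sorts a, so near a the sortlet agrees with one of finitely many
   polynomials, all with the same value and derivative at a. Hence the sortlet and its
   derivative along C^1 curves are continuous, and composing with alpha gives the theorem. *)

lemma length_sorted_list_of_UNIV:
  "length (sorted_list_of_set (UNIV :: 'n::{finite,linorder} set)) = CARD('n)"
  by (simp add: length_sorted_list_of_set)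

lemma idx_strict_mono:
  assumes "i < j" "j < CARD('n::{finite,linorder})"
  shows "(idx i :: 'n) < idx j"
  unfolding idx_def
  using assms length_sorted_list_of_UNIV[where 'n='n]
  by (intro sorted_wrt_nth_less[OF strict_sorted_list_of_set]) auto

lemma idx_le_iff:
  assumes "i < CARD('n::{finite,linorder})" "j < CARD('n)"
  shows "(idx i :: 'n) \<le> idx j \<longleftrightarrow> i \<le> j"
  using idx_strict_mono[of i j, where 'n='n] idx_strict_mono[of j i, where 'n='n] assms
  by (metis le_less linorder_not_less order_less_asym)

lemma idx_eq_iff:
  assumes "i < CARD('n::{finite,linorder})" "j < CARD('n)"
  shows "(idx i :: 'n) = idx j \<longleftrightarrow> i = j"
  using idx_le_iff[OF assms] idx_le_iff[OF assms(2,1)] by auto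

lemma idx_surj: "\<exists>i < CARD('n::{finite,linorder}). idx i = (x :: 'n)"
proof -
  have "x \<in> set (sorted_list_of_set (UNIV :: 'n set))" by simp
  then show ?thesis unfolding idx_def by (metis in_set_conv_nth length_sorted_list_of_UNIV)
qed

lemma bij_betw_idx: "bij_betw idx {..<CARD('n)} (UNIV :: 'n::{finite,linorder} set)"
  unfolding idx_def by (rule bij_betw_nth) (simp_all add: length_sorted_list_of_UNIV)

definition sorting_perms :: "(real,'n::{finite,linorder}) vec \<Rightarrow> ('n \<Rightarrow> 'n) set" where
  "sorting_perms a = {s. s permutes UNIV \<and> mono (\<lambda>x. a $ s x)}"

definition sorted_gap ::
    "('n::{finite,linorder} \<Rightarrow> 'n) \<Rightarrow> (real,'n) vec \<Rightarrow> nat \<Rightarrow> real" where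
  "sorted_gap s a k = a $ s (idx (Suc k)) - a $ s (idx k)"

definition signed_gap_product ::
    "('n::{finite,linorder} \<Rightarrow> 'n) \<Rightarrow> (real,'n) vec \<Rightarrow> real" where
  "signed_gap_product s a = of_int (sign s) * (\<Prod>k<CARD('n) - 1. sorted_gap s a k)"

definition signed_gap_product_deriv ::
    "('n::{finite,linorder} \<Rightarrow> 'n) \<Rightarrow> (real,'n) vec \<Rightarrow> (real,'n) vec \<Rightarrow> real" where
  "signed_gap_product_deriv s a v = of_int (sign s) *
     (\<Sum>k<CARD('n) - 1. sorted_gap s v k * (\<Prod>j\<in>{..<CARD('n) - 1} - {k}. sorted_gap s a j))"

lemma finite_sorting_perms: "finite (sorting_perms (a :: (real,'n::{finite,linorder}) vec))"
  by (rule finite_subset[of _ UNIV]) simp_all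

lemma sorting_perms_permutes: "s \<in> sorting_perms a \<Longrightarrow> s permutes UNIV"
  by (simp add: sorting_perms_def)

lemma sorting_perms_mono: "s \<in> sorting_perms a \<Longrightarrow> x \<le> y \<Longrightarrow> a $ s x \<le> a $ s y"
  by (simp add: sorting_perms_def mono_def)

lemma sorting_perms_nonempty: "\<exists>s. s \<in> sorting_perms (a :: (real,'n::{finite,linorder}) vec)"
proof -
  define ys where "ys = sort_key (\<lambda>y. a $ y) (sorted_list_of_set (UNIV :: 'n set))"
  have len: "length ys = CARD('n)"
    by (simp add: ys_def length_sorted_list_of_UNIV)
  have bij_ys: "bij_betw ((!) ys) {..<CARD('n)} UNIV"
    by (rule bij_betw_nth) (simp_all add: ys_def length_sorted_list_of_UNIV)
  define s where "s = (!) ys \<circ> inv_into {..<CARD('n)} (idx :: nat \<Rightarrow> 'n)"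
  have "bij s"
    unfolding s_def using bij_betw_trans[OF bij_betw_inv_into[OF bij_betw_idx] bij_ys] by simp
  then have "s permutes UNIV"
    using bij_imp_permutes[of s UNIV] by simp
  moreover have "mono (\<lambda>x. a $ s x)"
  proof (rule monoI)
    fix x y :: 'n
    assume "x \<le> y"
    obtain i where i: "i < CARD('n)" "x = idx i" using idx_surj by metis
    obtain j where j: "j < CARD('n)" "y = idx j" using idx_surj by metis
    have "i \<le> j" using \<open>x \<le> y\<close> idx_le_iff[OF i(1) j(1)] i j by simp
    have "s x = ys ! i" "s y = ys ! j"
      using i j bij_betw_inv_into_left[OF bij_betw_idx[where 'n='n]] by (simp_all add: s_def)
    moreover have "sorted (map (\<lambda>y. a $ y) ys)" by (simp add: ys_def)
    ultimately show "a $ s x \<le> a $ s y"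
      using sorted_nth_mono[of "map (\<lambda>y. a $ y) ys" i j] \<open>i \<le> j\<close> j(1) len by simp
  qed
  ultimately show ?thesis unfolding sorting_perms_def by blast
qed

lemma sorting_perms_values_eq:
  assumes "s \<in> sorting_perms a" "t \<in> sorting_perms (a :: (real,'n::{finite,linorder}) vec)"
  shows "a $ s x = a $ t x"
proof -
  define xs where "xs = sorted_list_of_set (UNIV :: 'n set)"
  have sorted_values: "sorted (map (\<lambda>y. a $ p y) xs)"
      "mset (map (\<lambda>y. a $ p y) xs) = image_mset (($) a) (mset_set UNIV)"
    if p: "p \<in> sorting_perms a" for p
  proof -
    have "xs ! i \<le> xs ! j" if "i \<le> j" "j < length xs" for i j
      using idx_le_iff[of i j, where 'n='n] that length_sorted_list_of_UNIV[where 'n='n]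
      unfolding idx_def xs_def by simp
    then show "sorted (map (\<lambda>y. a $ p y) xs)"
      unfolding sorted_iff_nth_mono by (simp add: sorting_perms_mono[OF p])
    have "mset xs = mset_set UNIV"
      using mset_set_set[of xs] by (simp add: xs_def)
    then have "image_mset p (mset xs) = mset_set UNIV"
      using sorting_perms_permutes[OF p] image_mset_mset_set[of p UNIV]
      by (simp add: permutes_inj permutes_image)
    moreover have "mset (map (\<lambda>y. a $ p y) xs) = image_mset (($) a) (image_mset p (mset xs))"
      by (simp add: multiset.map_comp comp_def)
    ultimately show "mset (map (\<lambda>y. a $ p y) xs) = image_mset (($) a) (mset_set UNIV)"
      by simp
  qed
  have "sort (map (\<lambda>y. a $ t y) xs) = map (\<lambda>y. a $ p y) xs" if "p \<in> sorting_perms a" for p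
    using sorted_values[OF that] sorted_values[OF assms(2)] by (intro properties_for_sort) simp_all
  then have "map (\<lambda>y. a $ s y) xs = map (\<lambda>y. a $ t y) xs"
    using assms by metis
  moreover have "x \<in> set xs" by (simp add: xs_def)
  ultimately show ?thesis by auto
qed

lemma sorted_gap_eq:
  "s \<in> sorting_perms a \<Longrightarrow> t \<in> sorting_perms a \<Longrightarrow> sorted_gap s a = sorted_gap t a"
  by (intro ext) (simp add: sorted_gap_def sorting_perms_values_eq[of s a t])

lemma sorting_perms_unique:
  assumes "inj (($) a)" "s \<in> sorting_perms a" "t \<in> sorting_perms a"
  shows "s = t"
proof
  fix x
  show "s x = t x"
    using sorting_perms_values_eq[OF assms(2,3), of x] assms(1) by (simp add: inj_def)
qed

lemma sorted_gap_eq_0_between: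
  assumes "s \<in> sorting_perms a" "m \<le> j" "j < n" "n < CARD('n::{finite,linorder})"
    and "a $ s (idx m) = a $ s (idx n :: 'n)"
  shows "sorted_gap s a j = 0"
proof -
  have mono: "a $ s (idx i) \<le> a $ s (idx k)" if "i \<le> k" "k < CARD('n)" for i k
    using sorting_perms_mono[OF assms(1)] idx_le_iff[of i k, where 'n='n] that by simp
  show ?thesis
    using mono[of m j] mono[of j "Suc j"] mono[of "Suc j" n] assms
    by (simp add: sorted_gap_def)
qed

lemma sorting_perms_tie_positions:
  assumes "s \<in> sorting_perms a" "x \<noteq> y" "a $ s x = a $ s (y :: 'n::{finite,linorder})"
  obtains m n where "m < n" "n < CARD('n)" "{x, y} = {idx m, idx n}" "a $ s (idx m) = a $ s (idx n)"
proof -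
  obtain m n where mn: "m < CARD('n)" "idx m = x" "n < CARD('n)" "idx n = y"
    using idx_surj by metis
  show ?thesis
  proof (cases m n rule: linorder_cases)
    case less
    then show ?thesis using that mn assms(3) by auto
  next
    case equal
    then show ?thesis using mn assms(2) by simp
  next
    case greater
    then show ?thesis using that[of n m] mn assms(3) by (auto simp: insert_commute)
  qed
qed

lemma sorted_gap_tie:
  assumes "s \<in> sorting_perms a" "\<not> inj (($) a)"
  shows "\<exists>k < CARD('n::{finite,linorder}) - 1. sorted_gap s (a :: (real,'n) vec) k = 0"
proof -
  obtain x y where "x \<noteq> y" "a $ x = a $ y"
    using assms(2) unfolding inj_def by blast
  moreover have "s (inv s z) = z" for z
    using permutes_inverses(1)[OF sorting_perms_permutes[OF assms(1)]] .
  ultimately have "inv s x \<noteq> inv s y" "a $ s (inv s x) = a $ s (inv s y)"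
    by metis+
  then obtain m n where "m < n" "n < CARD('n)" "{inv s x, inv s y} = {idx m, idx n}"
      "a $ s (idx m) = a $ s (idx n)"
    by (rule sorting_perms_tie_positions[OF assms(1)])
  then show ?thesis
    using sorted_gap_eq_0_between[OF assms(1), of m m n] by (intro exI[of _ m]) auto
qed

lemma signed_gap_product_eq_0:
  assumes "s \<in> sorting_perms a" "\<not> inj (($) a)"
  shows "signed_gap_product s a = 0"
  using sorted_gap_tie[OF assms] by (auto simp: signed_gap_product_def intro: prod_zero)

lemma sorted_gap_zeros_cases:
  fixes a :: "(real,'n::{finite,linorder}) vec"
  assumes "s \<in> sorting_perms a"
  obtains (no_tie) "inj (($) a)"
    | (one_tie) k0 where "k0 < CARD('n) - 1" "sorted_gap s a k0 = 0"
        "\<And>j. j < CARD('n) - 1 \<Longrightarrow> sorted_gap s a j = 0 \<Longrightarrow> j = k0"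
    | (two_ties) k1 k2 where "k1 < CARD('n) - 1" "k2 < CARD('n) - 1" "k1 \<noteq> k2"
        "sorted_gap s a k1 = 0" "sorted_gap s a k2 = 0"
proof (cases "inj (($) a)")
  case True
  then show ?thesis by (rule no_tie)
next
  case False
  then obtain k0 where k0: "k0 < CARD('n) - 1" "sorted_gap s a k0 = 0"
    using sorted_gap_tie[OF assms] by blast
  show ?thesis
  proof (cases "\<exists>k2 < CARD('n) - 1. k2 \<noteq> k0 \<and> sorted_gap s a k2 = 0")
    case True
    then show ?thesis using two_ties k0 by blast
  next
    case False
    then show ?thesis using one_tie k0 by blast
  qed
qed

lemma sorting_perms_one_tie_fibres:
  fixes a :: "(real,'n::{finite,linorder}) vec"
  assumes s: "s \<in> sorting_perms a"
    and single: "\<And>j. j < CARD('n) - 1 \<Longrightarrow> sorted_gap s a j = 0 \<Longrightarrow> j = k0"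
    and tie: "a $ s x = a $ s y"
  shows "x = y \<or> {x, y} = {idx k0, idx (Suc k0)}"
proof (rule ccontr)
  assume not_pq: "\<not> (x = y \<or> {x, y} = {idx k0, idx (Suc k0)})"
  then obtain m n where mn: "m < n" "n < CARD('n)" "{x, y} = {idx m, idx n}"
      "a $ s (idx m) = a $ s (idx n)"
    using sorting_perms_tie_positions[OF s _ tie] by metis
  then have "sorted_gap s a m = 0" "sorted_gap s a (n - 1) = 0"
    using sorted_gap_eq_0_between[OF s, of m m n] sorted_gap_eq_0_between[OF s, of m "n - 1" n]
    by simp_all
  then have "m = k0" "n - 1 = k0"
    using single[of m] single[of "n - 1"] mn by simp_all
  then have "m = k0" "n = Suc k0" using mn(1) by simp_all
  then show False using mn not_pq by simp
qed

lemma perm_preserving_fun_with_one_tie: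
  assumes "\<sigma> permutes UNIV" "\<And>x. g (\<sigma> x) = g x"
    and "\<And>x y. g x = g y \<Longrightarrow> x = y \<or> {x, y} = {p, q}"
  shows "\<sigma> = id \<or> \<sigma> = Transposition.transpose p q"
proof -
  have "\<sigma> x = x" if "x \<notin> {p, q}" for x
    using assms(3)[of "\<sigma> x" x] assms(2)[of x] that by auto
  then have "\<sigma> permutes {p, q}"
    using permutes_superset[OF assms(1)] by blast
  then show ?thesis by (simp add: permutes_doubleton_iff)
qed

lemma signed_sorted_gap_eq_one_tie:
  fixes a v :: "(real,'n::{finite,linorder}) vec"
  assumes s: "s \<in> sorting_perms a" and t: "t \<in> sorting_perms a"
    and k0: "k0 < CARD('n) - 1"
    and single: "\<And>j. j < CARD('n) - 1 \<Longrightarrow> sorted_gap s a j = 0 \<Longrightarrow> j = k0"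
  shows "of_int (sign t) * sorted_gap t v k0 = of_int (sign s) * sorted_gap s v k0"
proof -
  define p q where "p = (idx k0 :: 'n)" and "q = (idx (Suc k0) :: 'n)"
  have "p \<noteq> q" using k0 idx_eq_iff[of k0 "Suc k0", where 'n='n] by (simp add: p_def q_def)
  define \<sigma> where "\<sigma> = inv s \<circ> t"
  have s_perm: "s permutes UNIV" and t_perm: "t permutes UNIV"
    using s t by (simp_all add: sorting_perms_permutes)
  have t_eq: "t = s \<circ> \<sigma>"
    unfolding \<sigma>_def by (rule ext) (simp add: permutes_inverses(1)[OF s_perm])
  have "\<sigma> permutes UNIV"
    unfolding \<sigma>_def using permutes_compose[OF t_perm permutes_inv[OF s_perm]] .
  moreover have "a $ s (\<sigma> x) = a $ s x" for x
    using sorting_perms_values_eq[OF t s, of x] by (simp add: t_eq)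
  ultimately have "\<sigma> = id \<or> \<sigma> = Transposition.transpose p q"
    using sorting_perms_one_tie_fibres[OF s single] unfolding p_def q_def
    by (intro perm_preserving_fun_with_one_tie)
  then show ?thesis
  proof
    assume "\<sigma> = id"
    then show ?thesis by (simp add: t_eq)
  next
    assume \<sigma>: "\<sigma> = Transposition.transpose p q"
    have "permutation s" using permutes_imp_permutation[OF _ s_perm] by simp
    then have "sign t = sign s * sign (Transposition.transpose p q)"
      unfolding t_eq \<sigma> by (intro sign_compose permutation_swap_id)
    then have "sign t = - sign s" using \<open>p \<noteq> q\<close> by (simp add: sign_swap_id)
    moreover have "sorted_gap t v k0 = - sorted_gap s v k0"
      using \<open>p \<noteq> q\<close> by (simp add: t_eq \<sigma> sorted_gap_def flip: p_def q_def)
    ultimately show ?thesis by simp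
  qed
qed

lemma signed_gap_product_deriv_eq:
  fixes a v :: "(real,'n::{finite,linorder}) vec"
  assumes s: "s \<in> sorting_perms a" and t: "t \<in> sorting_perms a"
  shows "signed_gap_product_deriv s a v = signed_gap_product_deriv t a v"
proof -
  define C where "C k = (\<Prod>j\<in>{..<CARD('n) - 1} - {k}. sorted_gap s a j)" for k
  have deriv_eq: "signed_gap_product_deriv u a v =
      of_int (sign u) * (\<Sum>k<CARD('n) - 1. sorted_gap u v k * C k)"
    if "u \<in> sorting_perms a" for u
    unfolding signed_gap_product_deriv_def C_def sorted_gap_eq[OF s that] by (rule refl)
  from s show ?thesis
  proof (cases rule: sorted_gap_zeros_cases)
    case no_tie
    then show ?thesis using sorting_perms_unique[OF _ s t] by simp
  next
    case (one_tie k0)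
    have "C k = 0" if "k \<in> {..<CARD('n) - 1} - {k0}" for k
      unfolding C_def using one_tie(1,2) that by (intro prod_zero bexI[of _ k0]) auto
    then have "(\<Sum>k<CARD('n) - 1. sorted_gap u v k * C k) = sorted_gap u v k0 * C k0" for u
      using one_tie(1) by (subst sum.remove[of _ k0]) (simp_all add: sum.neutral)
    then show ?thesis
      using signed_sorted_gap_eq_one_tie[OF s t one_tie(1,3), of v] by (simp add: deriv_eq s t)
  next
    case (two_ties k1 k2)
    have "C k = 0" for k
    proof -
      obtain k' where "k' < CARD('n) - 1" "k' \<noteq> k" "sorted_gap s a k' = 0"
        using two_ties by metis
      then show ?thesis unfolding C_def by (intro prod_zero bexI[of _ k']) auto
    qed
    then show ?thesis by (simp add: deriv_eq s t)
  qed
qed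

definition sorted_gap_product :: "(real,'n::{finite,linorder}) vec \<Rightarrow> real" where
  "sorted_gap_product a = signed_gap_product (SOME s. s \<in> sorting_perms a) a"

definition sorted_gap_product_deriv ::
    "(real,'n::{finite,linorder}) vec \<Rightarrow> (real,'n) vec \<Rightarrow> real" where
  "sorted_gap_product_deriv a v = signed_gap_product_deriv (SOME s. s \<in> sorting_perms a) a v"

lemma some_sorting_perm: "(SOME s. s \<in> sorting_perms a) \<in> sorting_perms a"
  using sorting_perms_nonempty by (rule someI_ex)

lemma sorted_gap_product_eq:
  assumes "s \<in> sorting_perms a"
  shows "sorted_gap_product a = signed_gap_product s a"
proof (cases "inj (($) a)")
  case True
  then show ?thesis
    using sorting_perms_unique[OF True some_sorting_perm assms] by (simp add: sorted_gap_product_def)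
next
  case False
  then show ?thesis
    using signed_gap_product_eq_0[OF assms] signed_gap_product_eq_0[OF some_sorting_perm]
    by (simp add: sorted_gap_product_def)
qed

lemma sorted_gap_product_deriv_eq:
  "s \<in> sorting_perms a \<Longrightarrow> sorted_gap_product_deriv a v = signed_gap_product_deriv s a v"
  unfolding sorted_gap_product_deriv_def by (rule signed_gap_product_deriv_eq[OF some_sorting_perm])

lemma sortperm_eq:
  assumes "inj (($) (\<alpha> r))" "s \<in> sorting_perms (\<alpha> r)"
  shows "sortperm \<alpha> r = s"
  unfolding sortperm_def
proof (rule the_equality)
  have "\<alpha> r $ s x < \<alpha> r $ s y" if "x < y" for x y
    using sorting_perms_mono[OF assms(2), of x y] that assms(1)
      permutes_inj[OF sorting_perms_permutes[OF assms(2)]]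
    by (auto simp: inj_def order.strict_iff_order)
  then show "s permutes UNIV \<and> (\<forall>x y. x < y \<longrightarrow> \<alpha> r $ s x < \<alpha> r $ s y)"
    using sorting_perms_permutes[OF assms(2)] by blast
next
  fix p assume p: "p permutes UNIV \<and> (\<forall>x y. x < y \<longrightarrow> \<alpha> r $ p x < \<alpha> r $ p y)"
  then have "mono (\<lambda>x. \<alpha> r $ p x)"
    by (auto simp: mono_def order.order_iff_strict)
  with p have "p \<in> sorting_perms (\<alpha> r)" by (simp add: sorting_perms_def)
  then show "p = s" using sorting_perms_unique[OF assms(1) _ assms(2)] by simp
qed

lemma sortlet_eq_sorted_gap_product: "sortlet \<alpha> r = sorted_gap_product (\<alpha> r)"
proof (cases "inj (($) (\<alpha> r))")
  case True
  then show ?thesis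
    using sortperm_eq[of \<alpha> r, OF True some_sorting_perm]
    by (simp add: sortlet_def Let_def sorted_gap_product_def signed_gap_product_def sorted_gap_def)
next
  case False
  then show ?thesis
    using signed_gap_product_eq_0[OF some_sorting_perm]
    by (simp add: sortlet_def sorted_gap_product_def)
qed

lemma tendsto_eventually_one_of:
  assumes "finite S" "\<And>s. s \<in> S \<Longrightarrow> (h s \<longlongrightarrow> L) F"
    and "eventually (\<lambda>x. \<exists>s\<in>S. f x = h s x) F"
  shows "(f \<longlongrightarrow> L) F"
proof (rule topological_tendstoI)
  fix U assume "open U" "L \<in> U"
  then have "\<forall>s\<in>S. eventually (\<lambda>x. h s x \<in> U) F"
    using assms(2) topological_tendstoD by blast
  then have "eventually (\<lambda>x. \<forall>s\<in>S. h s x \<in> U) F"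
    by (rule eventually_ball_finite[OF assms(1)])
  with assms(3) show "eventually (\<lambda>x. f x \<in> U) F"
    by eventually_elim auto
qed

lemma sorting_perms_eventually_subset:
  fixes a :: "(real,'n::{finite,linorder}) vec"
  assumes "(f \<longlongrightarrow> a) F"
  shows "eventually (\<lambda>y. sorting_perms (f y) \<subseteq> sorting_perms a) F"
proof -
  define D where "D = (\<lambda>(i, j). \<bar>a $ i - a $ j\<bar>) ` {(i, j). a $ i \<noteq> a $ j}"
  define d where "d = Min (insert 1 D)"
  have "finite D" by (simp add: D_def)
  then have "d > 0" by (auto simp: d_def D_def)
  have d_le: "d \<le> \<bar>a $ i - a $ j\<bar>" if "a $ i \<noteq> a $ j" for i j
    unfolding d_def using that \<open>finite D\<close> by (intro Min_le) (auto simp: D_def)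
  have "\<forall>\<^sub>F y in F. \<forall>i. \<bar>f y $ i - a $ i\<bar> < d / 2"
  proof (rule eventually_all_finite)
    fix i
    show "\<forall>\<^sub>F y in F. \<bar>f y $ i - a $ i\<bar> < d / 2"
      using tendstoD[OF tendsto_vec_nth[OF assms], of "d / 2" i] \<open>d > 0\<close>
      by (simp add: dist_real_def)
  qed
  then show ?thesis
  proof eventually_elim
    case (elim y)
    have "mono (\<lambda>x. a $ s x)" if s: "s \<in> sorting_perms (f y)" for s
    proof (rule monoI, rule ccontr)
      fix u v :: 'n assume "u \<le> v" "\<not> a $ s u \<le> a $ s v"
      then have "d \<le> a $ s u - a $ s v" using d_le[of "s u" "s v"] by simp
      moreover have "f y $ s u \<le> f y $ s v" using sorting_perms_mono[OF s \<open>u \<le> v\<close>] .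
      ultimately show False using elim[rule_format, of "s u"] elim[rule_format, of "s v"] by linarith
    qed
    then show ?case by (auto simp: sorting_perms_def)
  qed
qed

lemma tendsto_sorted_gap_product:
  assumes "(f \<longlongrightarrow> a) F"
  shows "((\<lambda>x. sorted_gap_product (f x)) \<longlongrightarrow> sorted_gap_product a) F"
proof (rule tendsto_eventually_one_of[OF finite_sorting_perms])
  fix s assume s: "s \<in> sorting_perms a"
  have "((\<lambda>x. signed_gap_product s (f x)) \<longlongrightarrow> signed_gap_product s a) F"
    unfolding signed_gap_product_def sorted_gap_def by (intro tendsto_intros assms)
  then show "((\<lambda>x. signed_gap_product s (f x)) \<longlongrightarrow> sorted_gap_product a) F"
    by (simp add: sorted_gap_product_eq[OF s])
next
  show "\<forall>\<^sub>F x in F. \<exists>s\<in>sorting_perms a. sorted_gap_product (f x) = signed_gap_product s (f x)"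
    using sorting_perms_eventually_subset[OF assms]
    by eventually_elim (metis sorting_perms_nonempty sorted_gap_product_eq subsetD)
qed

lemma tendsto_sorted_gap_product_deriv:
  assumes "(f \<longlongrightarrow> a) F" "(g \<longlongrightarrow> v) F"
  shows "((\<lambda>x. sorted_gap_product_deriv (f x) (g x)) \<longlongrightarrow> sorted_gap_product_deriv a v) F"
proof (rule tendsto_eventually_one_of[OF finite_sorting_perms])
  fix s assume s: "s \<in> sorting_perms a"
  have "((\<lambda>x. signed_gap_product_deriv s (f x) (g x)) \<longlongrightarrow> signed_gap_product_deriv s a v) F"
    unfolding signed_gap_product_deriv_def sorted_gap_def by (intro tendsto_intros assms)
  then show "((\<lambda>x. signed_gap_product_deriv s (f x) (g x)) \<longlongrightarrow> sorted_gap_product_deriv a v) F"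
    by (simp add: sorted_gap_product_deriv_eq[OF s])
next
  show "\<forall>\<^sub>F x in F. \<exists>s\<in>sorting_perms a.
      sorted_gap_product_deriv (f x) (g x) = signed_gap_product_deriv s (f x) (g x)"
    using sorting_perms_eventually_subset[OF assms(1)]
    by eventually_elim (metis sorting_perms_nonempty sorted_gap_product_deriv_eq subsetD)
qed

lemma continuous_on_sorted_gap_product:
  "continuous_on S f \<Longrightarrow> continuous_on S (\<lambda>x. sorted_gap_product (f x))"
  unfolding continuous_on_def by (auto intro: tendsto_sorted_gap_product)

lemma continuous_on_sorted_gap_product_deriv:
  "continuous_on S f \<Longrightarrow> continuous_on S g \<Longrightarrow>
    continuous_on S (\<lambda>x. sorted_gap_product_deriv (f x) (g x))"
  unfolding continuous_on_def by (auto intro: tendsto_sorted_gap_product_deriv)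

lemma has_real_derivative_signed_gap_product:
  assumes "\<And>i. ((\<lambda>t. c t $ i) has_real_derivative c' $ i) (at t0)"
  shows "((\<lambda>t. signed_gap_product s (c t)) has_real_derivative
      signed_gap_product_deriv s (c t0) c') (at t0)"
  unfolding signed_gap_product_def signed_gap_product_deriv_def sorted_gap_def
  by (intro DERIV_cmult has_field_derivative_prod DERIV_diff assms)

lemma has_real_derivative_sorted_gap_product:
  assumes "\<And>i. ((\<lambda>t. c t $ i) has_real_derivative c' $ i) (at t0)"
  shows "((\<lambda>t. sorted_gap_product (c t)) has_real_derivative
      sorted_gap_product_deriv (c t0) c') (at t0)"
  unfolding has_field_derivative_iff
proof (rule tendsto_eventually_one_of[OF finite_sorting_perms])
  fix s assume s: "s \<in> sorting_perms (c t0)"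
  show "((\<lambda>t. (signed_gap_product s (c t) - signed_gap_product s (c t0)) / (t - t0))
      \<longlongrightarrow> sorted_gap_product_deriv (c t0) c') (at t0)"
    using has_real_derivative_signed_gap_product[OF assms, of s]
    by (simp add: has_field_derivative_iff sorted_gap_product_deriv_eq[OF s])
next
  have "(c \<longlongrightarrow> c t0) (at t0)"
    using DERIV_isCont[OF assms] by (intro vec_tendstoI) (simp add: isCont_def)
  from sorting_perms_eventually_subset[OF this] show "\<forall>\<^sub>F t in at t0. \<exists>s\<in>sorting_perms (c t0).
      (sorted_gap_product (c t) - sorted_gap_product (c t0)) / (t - t0)
      = (signed_gap_product s (c t) - signed_gap_product s (c t0)) / (t - t0)"
    by eventually_elim (metis sorting_perms_nonempty sorted_gap_product_eq subsetD)
qed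

lemma Ck_1_sorted_gap_product_comp:
  fixes f :: "'a::euclidean_space \<Rightarrow> (real,'n::{finite,linorder}) vec"
  assumes "\<And>i. Ck 1 (\<lambda>x. f x $ i)"
  shows "Ck 1 (\<lambda>x. sorted_gap_product (f x))"
proof -
  have f_C1: "continuous_on UNIV (\<lambda>x. f x $ i) \<and> (\<forall>b\<in>Basis. \<exists>g.
      (\<forall>x. ((\<lambda>t. f (x + t *\<^sub>R b) $ i) has_real_derivative g x) (at 0)) \<and> continuous_on UNIV g)"
    for i
    using assms[of i] by simp
  then have f_cont: "continuous_on UNIV f"
    using continuous_on_vec_lambda[of UNIV "\<lambda>i x. f x $ i"] by simp
  have "\<exists>g. (\<forall>x. ((\<lambda>t. sorted_gap_product (f (x + t *\<^sub>R b))) has_real_derivative g x) (at 0))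
      \<and> continuous_on UNIV g" if "b \<in> Basis" for b
  proof -
    have "\<forall>i. \<exists>g. (\<forall>x. ((\<lambda>t. f (x + t *\<^sub>R b) $ i) has_real_derivative g x) (at 0))
        \<and> continuous_on UNIV g"
      using f_C1 \<open>b \<in> Basis\<close> by blast
    then obtain G where G: "\<forall>i. (\<forall>x. ((\<lambda>t. f (x + t *\<^sub>R b) $ i) has_real_derivative G i x) (at 0))
        \<and> continuous_on UNIV (G i)"
      by (rule choice[THEN exE])
    define g where "g x = sorted_gap_product_deriv (f x) (\<chi> i. G i x)" for x
    have "((\<lambda>t. sorted_gap_product (f (x + t *\<^sub>R b))) has_real_derivative g x) (at 0)" for x
      using has_real_derivative_sorted_gap_product[of "\<lambda>t. f (x + t *\<^sub>R b)" "\<chi> i. G i x" 0] G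
      by (simp add: g_def)
    moreover have "continuous_on UNIV g"
      unfolding g_def using G
      by (intro continuous_on_sorted_gap_product_deriv continuous_on_vec_lambda f_cont) simp
    ultimately show ?thesis by blast
  qed
  moreover have "continuous_on UNIV (\<lambda>x. sorted_gap_product (f x))"
    by (rule continuous_on_sorted_gap_product[OF f_cont])
  ultimately show ?thesis by simp
qed

theorem mainTheorem2:
  fixes \<alpha> :: "((real,3) vec,'n::{finite,linorder}) vec \<Rightarrow> (real,'n) vec"
  assumes "CARD('n) \<ge> 2"
    and "\<forall>i. smooth_fun (\<lambda>r. \<alpha> r $ i)"
  shows "Ck 1 (sortlet \<alpha>)"
proof -
  have "Ck 1 (\<lambda>r. sorted_gap_product (\<alpha> r))"
    using assms(2) unfolding smooth_fun_def by (intro Ck_1_sorted_gap_product_comp) blast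
  moreover have "sortlet \<alpha> = (\<lambda>r. sorted_gap_product (\<alpha> r))"
    by (intro ext sortlet_eq_sorted_gap_product)
  ultimately show ?thesis by simp
qed

end
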